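(* Let $p$ range over primes and let $G$ be Catalan's constant. Then $$G=\frac{\pi^2}{8}\prod_{p\equiv3\ (\mathrm{mod}\ 4)}\frac{p^2-1}{p^2+1}=\frac1{16}\sum_{k=0}^\infty\frac{(-1)^k}{k!}\left[\gamma_k\!\left(\tfrac14\right)-\gamma_k\!\left(\tfrac34\right)\right],$$ and $$\prod_{p\equiv1\ (\mathrm{mod}\ 4)}\frac{p^2+1}{p^2-1}=\frac{12}{\pi^2}G=\frac{3}{4\pi^2}\sum_{k=0}^\infty\frac{(-1)^k}{k!}\left[\gamma_k\!\left(\tfrac14\right)-\gamma_k\!\left(\tfrac34\right)\right].$$
   Context: $G=\sum_{n\ge0}(-1)^n(2n+1)^{-2}$ is Catalan's constant. The Stieltjes constants $\gamma_k(a)$ are defined by the Laurent expansion of the Hurwitz zeta function at $s=1$: $\zeta(s,a)=\frac{1}{s-1}+\sum_{k\ge0}\frac{(-1)^k}{k!}\gamma_k(a)(s-1)^k$. *)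

theory Defs
  imports "HOL-Complex_Analysis.Complex_Analysis" "HOL-Computational_Algebra.Primes"
begin

definition catalan :: real where
  "catalan = (\<Sum>n. (-1) ^ n / (2 * real n + 1) ^ 2)"

text \<open>Hurwitz zeta function by its defining series (valid for Re s > 1, a > 0).\<close>
definition hurwitz_zeta_series :: "complex \<Rightarrow> real \<Rightarrow> complex" where
  "hurwitz_zeta_series s a = (\<Sum>n. complex_of_real (real n + a) powr (- s))"

definition hurwitz_zeta_regular :: "real \<Rightarrow> complex \<Rightarrow> complex" where
  "hurwitz_zeta_regular a = (THE g. g holomorphic_on UNIV \<and>
      (\<forall>s. 1 < Re s \<longrightarrow> g s = hurwitz_zeta_series s a - 1 / (s - 1)))"

text \<open>Stieltjes constants: zeta(s,a) = 1/(s-1) + sum_k (-1)^k/k! gamma_k(a) (s-1)^k,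
  i.e. gamma_k(a) = (-1)^k times the k-th derivative at 1 of the regular part.\<close>
definition stieltjes :: "nat \<Rightarrow> real \<Rightarrow> complex" where
  "stieltjes k a = (-1) ^ k * (deriv ^^ k) (hurwitz_zeta_regular a) 1"

end

theory Submission
  imports Defs "HOL-Real_Asymp.Real_Asymp"
begin

text \<open>The regular part \<open>\<zeta>(s,a) - 1/(s-1)\<close> of the Hurwitz zeta function is continued to an entire
  function one strip at a time: for \<open>b > 1\<close>, expanding \<open>(n+b+1) powr (1-s) - (n+b) powr (1-s)\<close> binomially and
  summing over \<open>n\<close> expresses \<open>\<zeta>(s,b)\<close> through \<open>b powr (1-s) / (s-1)\<close> and the values \<open>\<zeta>(s+j+1,b)\<close>, which are
  already known one unit further to the right. The Stieltjes series is then the Taylor series at \<open>1\<close>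
  of the entire function \<open>\<zeta>(s,1/4) - \<zeta>(s,3/4)\<close>, and at \<open>s = 2\<close> this function equals \<open>16 G\<close>.

  For the products, Euler's product formula for the completely multiplicative functions \<open>1/n\<^sup>2\<close>,
  \<open>1/n\<^sup>4\<close> and \<open>\<chi>\<^sub>4(n)/n\<^sup>2\<close> expresses the partial products over primes through \<open>\<zeta>(2) = \<pi>\<^sup>2/6\<close>,
  \<open>\<zeta>(4) = \<pi>\<^sup>4/90\<close> and \<open>L(2,\<chi>\<^sub>4) = G\<close>; the factors at \<open>p \<equiv> 3\<close> and \<open>p \<equiv> 1 (mod 4)\<close> are quotients of these
  Euler factors. The value of \<open>\<zeta>(4)\<close> is obtained by comparing Taylor coefficients in Euler's
  product for \<open>sin (\<pi> x)\<close>.\<close>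

section \<open>The Hurwitz zeta series\<close>

text \<open>Kept folded so that the simplifier does not split \<open>of_real (x + y)\<close> inside powers.\<close>
definition cpowr :: "real \<Rightarrow> complex \<Rightarrow> complex" where
  "cpowr x s = of_real x powr s"

lemma norm_cpowr: "x \<ge> 0 \<Longrightarrow> norm (cpowr x s) = x powr Re s"
  unfolding cpowr_def by (subst norm_powr_real_powr) auto

lemma hurwitz_zeta_series_cpowr: "hurwitz_zeta_series s b = (\<Sum>n. cpowr (real n + b) (-s))"
  unfolding hurwitz_zeta_series_def cpowr_def ..

lemma Re_ge_of_mem_cball: "s \<in> cball x d \<Longrightarrow> Re x - d \<le> Re s"
  using abs_Re_le_cmod[of "x - s"] by (auto simp: dist_norm)

lemma summable_shifted_powr:
  assumes "b > 0" "\<sigma> > 1"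
  shows "summable (\<lambda>n. (real n + b) powr (-\<sigma>))"
proof (rule summable_comparison_test')
  show "summable (\<lambda>n. real n powr (-\<sigma>))" using assms by (subst summable_real_powr_iff) auto
  show "norm ((real n + b) powr (-\<sigma>)) \<le> real n powr (-\<sigma>)" if "n \<ge> 1" for n
    using that assms by (auto intro!: powr_mono2')
qed

lemma summable_norm_hurwitz_terms:
  assumes "b > 0" "Re s > 1"
  shows "summable (\<lambda>n. norm (cpowr (real n + b) (-s)))"
  using summable_shifted_powr[OF assms] assms by (subst norm_cpowr) auto

lemma hurwitz_zeta_series_sums:
  assumes "b > 0" "Re s > 1"
  shows "(\<lambda>n. cpowr (real n + b) (-s)) sums hurwitz_zeta_series s b"
  using summable_norm_cancel[OF summable_norm_hurwitz_terms[OF assms]]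
  by (simp add: hurwitz_zeta_series_cpowr summable_sums)

lemma hurwitz_zeta_series_shift:
  assumes "a > 0" "Re s > 1"
  shows "hurwitz_zeta_series s a = cpowr a (-s) + hurwitz_zeta_series s (a + 1)"
proof -
  have "(\<lambda>n. cpowr (real (Suc n) + a) (-s)) sums (hurwitz_zeta_series s a - cpowr (real 0 + a) (-s))"
    using hurwitz_zeta_series_sums[OF assms] by (subst sums_Suc_iff) simp
  hence "(\<lambda>n. cpowr (real n + (a + 1)) (-s)) sums (hurwitz_zeta_series s a - cpowr a (-s))"
    by (simp add: add_ac)
  moreover have "(\<lambda>n. cpowr (real n + (a + 1)) (-s)) sums hurwitz_zeta_series s (a + 1)"
    using assms by (intro hurwitz_zeta_series_sums) auto
  ultimately show ?thesis by (simp add: sums_iff algebra_simps)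
qed

lemma norm_hurwitz_zeta_series_le:
  assumes "b \<ge> 1" "Re s \<ge> 2"
  shows "norm (hurwitz_zeta_series s b) \<le> b powr (2 - Re s) * (\<Sum>n. (real n + b) powr (-2))"
proof -
  have bound: "norm (cpowr (real n + b) (-s)) \<le> b powr (2 - Re s) * (real n + b) powr (-2)" for n
  proof -
    have "norm (cpowr (real n + b) (-s)) = (real n + b) powr (2 - Re s) * (real n + b) powr (-2)"
      using assms by (simp add: norm_cpowr flip: powr_add)
    also have "\<dots> \<le> b powr (2 - Re s) * (real n + b) powr (-2)"
      using assms by (intro mult_right_mono powr_mono2') auto
    finally show ?thesis .
  qed
  have "norm (hurwitz_zeta_series s b) \<le> (\<Sum>n. norm (cpowr (real n + b) (-s)))"
    unfolding hurwitz_zeta_series_cpowr using summable_norm_hurwitz_terms[of b s] assms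
    by (intro summable_norm) auto
  also have "\<dots> \<le> (\<Sum>n. b powr (2 - Re s) * (real n + b) powr (-2))"
    using summable_norm_hurwitz_terms[of b s] summable_shifted_powr[of b 2] assms bound
    by (intro suminf_le summable_mult) auto
  also have "\<dots> = b powr (2 - Re s) * (\<Sum>n. (real n + b) powr (-2))"
    using summable_shifted_powr[of b 2] assms by (intro suminf_mult) auto
  finally show ?thesis .
qed

lemma holomorphic_hurwitz_zeta_series:
  assumes "b \<ge> 1"
  shows "(\<lambda>s. hurwitz_zeta_series s b) holomorphic_on {s. Re s > 1}"
proof (rule holomorphic_uniform_sequence[where f = "\<lambda>N s. \<Sum>n<N. cpowr (real n + b) (-s)"])
  show "open {s. Re s > 1}" by (simp add: open_halfspace_Re_gt)
  show "(\<lambda>s. \<Sum>n<N. cpowr (real n + b) (-s)) holomorphic_on {s. Re s > 1}" for N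
    unfolding cpowr_def using assms by (intro holomorphic_intros) (auto simp del: of_real_add)
  fix x :: complex assume x: "x \<in> {s. Re s > 1}"
  define d where "d = (Re x - 1) / 2"
  have d: "d > 0" using x by (simp add: d_def)
  have Re_ge: "Re s \<ge> 1 + d" if "s \<in> cball x d" for s
    using Re_ge_of_mem_cball[OF that] by (simp add: d_def field_simps)
  have "uniform_limit (cball x d) (\<lambda>N s. \<Sum>n<N. cpowr (real n + b) (-s))
          (\<lambda>s. hurwitz_zeta_series s b) sequentially"
    unfolding hurwitz_zeta_series_cpowr
  proof (rule Weierstrass_m_test)
    show "norm (cpowr (real n + b) (-s)) \<le> (real n + b) powr (-(1+d))" if "s \<in> cball x d" for n s
      using assms Re_ge[OF that] by (auto simp: norm_cpowr intro: powr_mono)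
    show "summable (\<lambda>n. (real n + b) powr (-(1+d)))"
      using d assms by (intro summable_shifted_powr) auto
  qed
  moreover have "cball x d \<subseteq> {s. Re s > 1}" using Re_ge d by force
  ultimately show "\<exists>d>0. cball x d \<subseteq> {s. Re s > 1} \<and> uniform_limit (cball x d)
     (\<lambda>N s. \<Sum>n<N. cpowr (real n + b) (-s)) (\<lambda>s. hurwitz_zeta_series s b) sequentially"
    using d by blast
qed

lemma pochhammer_nonneg_of_nonneg: "(x::real) \<ge> 0 \<Longrightarrow> pochhammer x n \<ge> 0"
  by (simp add: pochhammer_prod prod_nonneg)

lemma norm_gbinomial_le_pochhammer:
  fixes z :: complex
  assumes "norm z \<le> \<rho>"
  shows "norm (z gchoose k) \<le> pochhammer \<rho> k / fact k"
proof -
  have "norm (z gchoose k) = norm (pochhammer (-z) k) / fact k"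
    by (simp add: gbinomial_pochhammer norm_mult norm_divide norm_power)
  also have "norm (pochhammer (-z) k) \<le> (\<Prod>i = 0..<k. norm (-z + of_nat i))"
    unfolding pochhammer_prod by (rule norm_prod_le)
  also have "\<dots> \<le> (\<Prod>i = 0..<k. \<rho> + of_nat i)"
  proof (intro prod_mono conjI)
    fix i
    have "norm (-z + of_nat i) \<le> norm (-z) + norm (of_nat i :: complex)" by (rule norm_triangle_ineq)
    thus "norm (-z + of_nat i) \<le> \<rho> + of_nat i" using assms by simp
  qed auto
  also have "\<dots> = pochhammer \<rho> k" by (simp add: pochhammer_prod)
  finally show ?thesis by (simp add: divide_right_mono)
qed

lemma summable_pochhammer_div_fact_power:
  fixes \<rho> q :: real
  assumes "0 < q" "q < 1"
  shows "summable (\<lambda>k. pochhammer \<rho> (k+1) / fact (k+1) * q ^ k)"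
proof -
  have "(\<lambda>k. ((-\<rho>) gchoose k) * (-q) ^ k) sums (1 + (-q)) powr (-\<rho>)"
    using assms by (intro gen_binomial_real) auto
  also have "(\<lambda>k. ((-\<rho>) gchoose k) * (-q) ^ k) = (\<lambda>k. pochhammer \<rho> k / fact k * q ^ k)"
    by (auto simp: gbinomial_pochhammer power_mult_distrib[symmetric] fun_eq_iff)
  finally have "summable (\<lambda>k. pochhammer \<rho> k / fact k * q ^ k)"
    by (rule sums_summable)
  hence "summable (\<lambda>k. (1/q) * (pochhammer \<rho> (Suc k) / fact (Suc k) * q ^ Suc k))"
    by (intro summable_mult) (subst summable_Suc_iff)
  thus ?thesis using assms by simp
qed

lemma holomorphic_on_gbinomial [holomorphic_intros]:
  assumes "f holomorphic_on A"
  shows "(\<lambda>s. f s gchoose k) holomorphic_on A"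
  unfolding gbinomial_altdef_of_nat using assms
  by (intro holomorphic_on_prod holomorphic_intros) auto

section \<open>Analytic continuation of the regular part\<close>

lemma sums_swap_dominated:
  fixes F :: "nat \<Rightarrow> nat \<Rightarrow> 'a::banach"
  assumes u: "summable u" "\<And>k. u k \<ge> 0" and v: "summable v" "\<And>n. v n \<ge> 0"
      and bound: "\<And>n k. norm (F n k) \<le> v n * u k"
      and rows: "\<And>n. (\<lambda>k. F n k) sums R n" and cols: "\<And>k. (\<lambda>n. F n k) sums C k"
      and "R sums L"
  shows "C sums L"
proof -
  have dom: "(\<lambda>(n,k). v n * u k) summable_on UNIV \<times> UNIV"
  proof (rule summable_on_SigmaI[where g = "\<lambda>n. v n * suminf u"])
    show "((\<lambda>k. (\<lambda>(n,k). v n * u k) (n, k)) has_sum v n * suminf u) UNIV" for n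
      using sums_mult[OF summable_sums[OF u(1)], of "v n"] u v
      by (auto intro!: sums_nonneg_imp_has_sum)
    show "(\<lambda>n. v n * suminf u) summable_on UNIV"
      using u v by (intro summable_nonneg_imp_summable_on summable_mult2 mult_nonneg_nonneg suminf_nonneg)
  qed (use u v in auto)
  have F: "(\<lambda>(n,k). F n k) summable_on UNIV \<times> UNIV"
    by (rule abs_summable_summable, rule Infinite_Sum.abs_summable_on_comparison_test'[OF dom])
      (use bound in auto)
  have R: "R n = (\<Sum>\<^sub>\<infinity>k. F n k)" for n
  proof -
    have "summable (\<lambda>k. norm (F n k))"
      by (rule summable_comparison_test'[OF summable_mult[OF u(1), of "v n"]]) (use bound in auto)
    from norm_summable_imp_has_sum[OF this rows] show ?thesis by (simp add: has_sum_iff)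
  qed
  have C: "C k = (\<Sum>\<^sub>\<infinity>n. F n k)" for k
  proof -
    have "summable (\<lambda>n. norm (F n k))"
      by (rule summable_comparison_test'[OF summable_mult2[OF v(1), of "u k"]]) (use bound in auto)
    from norm_summable_imp_has_sum[OF this cols] show ?thesis by (simp add: has_sum_iff)
  qed
  have "R summable_on UNIV"
    using summable_on_Sigma_banach[of F UNIV "\<lambda>_. UNIV"] F unfolding R by simp
  hence "L = (\<Sum>\<^sub>\<infinity>n. R n)"
    using \<open>R sums L\<close> has_sum_imp_sums[OF has_sum_infsum] sums_unique2 by blast
  also have "\<dots> = (\<Sum>\<^sub>\<infinity>k. C k)"
    unfolding R C by (rule infsum_swap_banach[OF F])
  finally have L: "L = (\<Sum>\<^sub>\<infinity>k. C k)" .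
  have "(\<lambda>(k,n). F n k) summable_on UNIV \<times> UNIV"
    using F by (subst (asm) summable_on_swap) simp
  hence "C summable_on UNIV"
    using summable_on_Sigma_banach[of "\<lambda>k n. F n k" UNIV "\<lambda>_. UNIV"] unfolding C by simp
  thus ?thesis unfolding L by (intro has_sum_imp_sums has_sum_infsum)
qed

lemma binomial_cpowr_difference_sums:
  assumes "x > 1"
  shows "(\<lambda>k. (w gchoose (k+1)) * cpowr x (w - 1 - of_nat k)) sums (cpowr (x + 1) w - cpowr x w)"
proof -
  have "(\<lambda>k. (w gchoose k) * cpowr x (w - of_nat k)) sums cpowr (x + 1) w"
    using assms gen_binomial_complex''[of 1 x w] by (simp add: cpowr_def)
  hence "(\<lambda>k. (w gchoose Suc k) * cpowr x (w - of_nat (Suc k))) sums (cpowr (x + 1) w - cpowr x w)"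
    by (subst sums_Suc_iff) simp
  thus ?thesis by (simp add: algebra_simps)
qed

lemma norm_gbinomial_cpowr_le:
  assumes "b > 1" "x \<ge> b"
  shows "norm ((w gchoose (k+1)) * cpowr x (w - 1 - of_nat k))
           \<le> x powr (Re w - 1) * (pochhammer (norm w) (k+1) / fact (k+1) * (1/b) ^ k)"
proof -
  have "norm ((w gchoose (k+1)) * cpowr x (w - 1 - of_nat k))
          = norm (w gchoose (k+1)) * (x powr (Re w - 1) * x powr (- real k))"
    using assms by (simp add: norm_mult norm_cpowr flip: powr_add)
  also have "\<dots> \<le> pochhammer (norm w) (k+1) / fact (k+1) * (x powr (Re w - 1) * (1/b) ^ k)"
  proof (intro mult_mono mult_left_mono)
    show "norm (w gchoose (k+1)) \<le> pochhammer (norm w) (k+1) / fact (k+1)"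
      by (rule norm_gbinomial_le_pochhammer) simp
    have "x powr (- real k) \<le> b powr (- real k)"
      using assms by (intro powr_mono2') auto
    also have "\<dots> = (1/b) ^ k"
      using assms by (simp add: powr_minus powr_realpow power_inverse divide_inverse)
    finally show "x powr (- real k) \<le> (1/b) ^ k" .
  qed (auto intro!: divide_nonneg_pos pochhammer_nonneg_of_nonneg)
  finally show ?thesis by (simp add: mult_ac)
qed

text \<open>Expanding \<open>(n + b + 1) powr (1 - s) - (n + b) powr (1 - s)\<close> binomially and summing over \<open>n\<close>
  telescopes to \<open>-b powr (1 - s)\<close>.\<close>
lemma hurwitz_zeta_series_binomial_sums:
  assumes b: "b > 1" and s: "Re s > 1"
  shows "(\<lambda>k. ((1-s) gchoose (k+1)) * hurwitz_zeta_series (s + of_nat k) b) sums (- cpowr b (1-s))"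
proof (rule sums_swap_dominated)
  define u where "u k = pochhammer (norm (1-s)) (k+1) / fact (k+1) * (1/b) ^ k" for k
  define v where "v n = (real n + b) powr (- Re s)" for n :: nat
  show "summable u" unfolding u_def using b by (intro summable_pochhammer_div_fact_power) auto
  show "u k \<ge> 0" for k
    unfolding u_def using b by (intro mult_nonneg_nonneg divide_nonneg_pos pochhammer_nonneg_of_nonneg) auto
  show "summable v" unfolding v_def using s b by (intro summable_shifted_powr) auto
  show "v n \<ge> 0" for n unfolding v_def by simp
  show "norm (((1-s) gchoose (k+1)) * cpowr (real n + b) (1 - s - 1 - of_nat k)) \<le> v n * u k" for n k
    using norm_gbinomial_cpowr_le[OF b, of "real n + b" "1-s" k] by (simp add: u_def v_def)
  show "(\<lambda>k. ((1-s) gchoose (k+1)) * cpowr (real n + b) (1 - s - 1 - of_nat k))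
          sums (cpowr (real (Suc n) + b) (1-s) - cpowr (real n + b) (1-s))" for n
    using binomial_cpowr_difference_sums[of "real n + b" "1-s"] b by (simp add: add_ac)
  show "(\<lambda>n. ((1-s) gchoose (k+1)) * cpowr (real n + b) (1 - s - 1 - of_nat k))
          sums (((1-s) gchoose (k+1)) * hurwitz_zeta_series (s + of_nat k) b)" for k
    using hurwitz_zeta_series_sums[of b "s + of_nat k"] b s by (intro sums_mult) (simp add: algebra_simps)
  have "(\<lambda>n. cpowr (real n + b) (1-s)) \<longlonglongrightarrow> 0"
  proof (rule tendsto_norm_zero_cancel)
    have "filterlim (\<lambda>n. real n + b) at_top sequentially"
      by (subst add.commute, rule filterlim_tendsto_add_at_top[OF tendsto_const filterlim_real_sequentially])
    hence "(\<lambda>n. (real n + b) powr (1 - Re s)) \<longlonglongrightarrow> 0"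
      using s by (intro tendsto_neg_powr) auto
    thus "(\<lambda>n. norm (cpowr (real n + b) (1-s))) \<longlonglongrightarrow> 0"
      using b by (simp add: norm_cpowr)
  qed
  from telescope_sums[OF this]
  show "(\<lambda>n. cpowr (real (Suc n) + b) (1-s) - cpowr (real n + b) (1-s)) sums (- cpowr b (1-s))"
    by simp
qed

definition powr_difference_quotient :: "real \<Rightarrow> complex \<Rightarrow> complex" where
  "powr_difference_quotient b s = (if s = 1 then - of_real (ln b) else (cpowr b (1-s) - 1) / (s - 1))"

lemma entire_powr_difference_quotient:
  assumes "b > 0"
  shows "powr_difference_quotient b holomorphic_on UNIV"
proof (rule no_isolated_singularity'[where K = "{1}"])
  have "((\<lambda>s. cpowr b (1-s)) has_field_derivative - of_real (ln b)) (at 1)"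
  proof -
    have "((\<lambda>s. of_real b powr (1-s)) has_field_derivative (Ln (of_real b) * of_real b powr (1-1)) * (-1)) (at 1)"
      by (rule DERIV_chain'[where f = "\<lambda>s. 1 - s"])
         (auto intro!: derivative_eq_intros has_field_derivative_powr_right simp: assms)
    thus ?thesis using assms by (simp add: cpowr_def Ln_of_real)
  qed
  hence "((\<lambda>s. (cpowr b (1-s) - 1) / (s - 1)) \<longlongrightarrow> - of_real (ln b)) (at 1)"
    using assms by (simp add: has_field_derivative_iff cpowr_def)
  hence "(powr_difference_quotient b \<longlongrightarrow> - of_real (ln b)) (at 1)"
    by (rule Lim_transform_eventually) (auto simp: powr_difference_quotient_def eventually_at_filter)
  thus "(powr_difference_quotient b \<longlongrightarrow> powr_difference_quotient b z) (at z within UNIV)" if "z \<in> {1}" for z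
    using that by (simp add: powr_difference_quotient_def)
  show "powr_difference_quotient b holomorphic_on UNIV - {1}"
  proof (rule holomorphic_transform[where f = "\<lambda>s. (cpowr b (1-s) - 1) / (s - 1)"])
    show "(\<lambda>s. (cpowr b (1-s) - 1) / (s - 1)) holomorphic_on UNIV - {1}"
      unfolding cpowr_def using assms by (intro holomorphic_intros) auto
  qed (auto simp: powr_difference_quotient_def)
qed auto

text \<open>The \<open>j\<close>-th term of the series continuing \<open>g(s) = \<zeta>(s,b) - 1/(s-1)\<close> one unit to the left:
  the pole part \<open>1/(s+j)\<close> of \<open>\<zeta>(s+j+1,b)\<close> cancels against the zero of \<open>(-s) gchoose (j+1)\<close>
  at \<open>s = -j\<close>, leaving the second summand.\<close>
definition continuation_term :: "(complex \<Rightarrow> complex) \<Rightarrow> nat \<Rightarrow> complex \<Rightarrow> complex" where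
  "continuation_term g j s = ((-s) gchoose (j+1)) / of_nat (j+2) * g (s + of_nat (j+1))
                              - ((-s) gchoose j) / (of_nat (j+1) * of_nat (j+2))"

lemma continuation_term_eq:
  assumes "g (s + of_nat (j+1)) = hurwitz_zeta_series (s + of_nat (j+1)) b - 1 / (s + of_nat j)"
      and "s + of_nat j \<noteq> 0"
  shows "continuation_term g j s = ((-s) gchoose (j+1)) / of_nat (j+2) * hurwitz_zeta_series (s + of_nat (j+1)) b"
proof -
  have rec: "(-s) gchoose (j+1) = ((-s) gchoose j) * (-s - of_nat j) / of_nat (j+1)"
    using gbinomial_Suc_rec[of "-s" j] by simp
  have "((-s) gchoose (j+1)) / of_nat (j+2) * (1 / (s + of_nat j))
        = ((-s) gchoose j) * ((-s - of_nat j) / (s + of_nat j)) / (of_nat (j+1) * of_nat (j+2))"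
    unfolding rec by (simp add: field_simps del: of_nat_Suc of_nat_add)
  also have "(-s - of_nat j) / (s + of_nat j) = -1"
    using assms(2) by (simp add: field_simps)
  finally show ?thesis
    unfolding continuation_term_def assms(1) by (simp add: algebra_simps)
qed

lemma continuation_series_sums:
  assumes b: "b > 1" and s: "Re s > 1"
      and g: "\<And>s. Re s > 1 \<Longrightarrow> g s = hurwitz_zeta_series s b - 1 / (s - 1)"
  shows "(\<lambda>j. continuation_term g j s) sums (cpowr b (1-s) / (s-1) - hurwitz_zeta_series s b)"
proof -
  define G where "G k = ((1-s) gchoose (k+1)) * hurwitz_zeta_series (s + of_nat k) b" for k
  have s1: "1 - s \<noteq> 0" using s by auto
  have "(\<lambda>j. G (Suc j)) sums (- cpowr b (1-s) - G 0)"
    using hurwitz_zeta_series_binomial_sums[OF b s] unfolding G_def by (subst sums_Suc_iff) simp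
  hence "(\<lambda>j. G (Suc j) / (1 - s)) sums ((- cpowr b (1-s) - G 0) / (1 - s))"
    by (rule sums_divide)
  moreover have "G (Suc j) / (1 - s) = continuation_term g j s" for j
  proof -
    have "of_nat (Suc (Suc j)) * ((1-s) gchoose Suc (Suc j)) = (1-s) * ((-s) gchoose Suc j)"
      using gbinomial_absorption[of "Suc j" "1-s"] by simp
    hence absorb: "((1-s) gchoose Suc (Suc j)) / (1-s) = ((-s) gchoose (j+1)) / of_nat (j+2)"
      using s1 by (simp add: field_simps del: of_nat_Suc)
    have "G (Suc j) / (1 - s)
          = ((1-s) gchoose Suc (Suc j)) / (1-s) * hurwitz_zeta_series (s + of_nat (j+1)) b"
      by (simp add: G_def add_ac)
    also have "\<dots> = ((-s) gchoose (j+1)) / of_nat (j+2) * hurwitz_zeta_series (s + of_nat (j+1)) b"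
      unfolding absorb ..
    also have "\<dots> = continuation_term g j s"
      using s by (intro continuation_term_eq[symmetric]) (auto simp: g complex_eq_iff)
    finally show ?thesis .
  qed
  moreover have "(- cpowr b (1-s) - G 0) / (1 - s) = cpowr b (1-s) / (s-1) - hurwitz_zeta_series s b"
    using s1 by (simp add: G_def field_simps)
  ultimately show ?thesis by simp
qed

lemma norm_continuation_term_le:
  assumes b: "b > 1" and g: "\<And>s. Re s > 1 \<Longrightarrow> g s = hurwitz_zeta_series s b - 1 / (s - 1)"
      and s: "norm s \<le> \<rho>" and j: "real j \<ge> \<rho> + 2"
  shows "norm (continuation_term g j s)
           \<le> pochhammer \<rho> (j+1) / fact (j+1) * (1/b) ^ j * (b powr (1 + \<rho>) * (\<Sum>n. (real n + b) powr (-2)))"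
    (is "_ \<le> ?c * (1/b) ^ j * (_ * ?K)")
proof -
  have c: "?c \<ge> 0" and K: "?K \<ge> 0"
    using b order.trans[OF norm_ge_zero s]
    by (auto intro!: divide_nonneg_pos pochhammer_nonneg_of_nonneg suminf_nonneg summable_shifted_powr)
  have Re: "Re (s + of_nat (j+1)) \<ge> 2"
    using s j abs_Re_le_cmod[of s] by simp
  have "continuation_term g j s = ((-s) gchoose (j+1)) / of_nat (j+2) * hurwitz_zeta_series (s + of_nat (j+1)) b"
    using Re by (intro continuation_term_eq) (auto simp: g complex_eq_iff)
  hence "norm (continuation_term g j s)
           = norm ((-s) gchoose (j+1)) / real (j+2) * norm (hurwitz_zeta_series (s + of_nat (j+1)) b)"
    by (simp only: norm_mult norm_divide norm_of_nat)
  also have "\<dots> \<le> norm ((-s) gchoose (j+1)) * norm (hurwitz_zeta_series (s + of_nat (j+1)) b)"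
    by (intro mult_right_mono) (simp_all add: divide_le_eq mult_le_cancel_left1)
  also have "\<dots> \<le> ?c * (b powr (2 - Re (s + of_nat (j+1))) * ?K)"
    using b Re s c K
    by (intro mult_mono norm_gbinomial_le_pochhammer norm_hurwitz_zeta_series_le) auto
  also have "\<dots> \<le> ?c * ((b powr (1 + \<rho>) * (1/b) ^ j) * ?K)"
  proof -
    have "b powr (2 - Re (s + of_nat (j+1))) \<le> b powr ((1 + \<rho>) - real j)"
      using b s abs_Re_le_cmod[of s] by (intro powr_mono) auto
    also have "\<dots> = b powr (1 + \<rho>) * (1/b) ^ j"
      using b by (simp add: powr_diff powr_realpow power_divide)
    finally show ?thesis using c K by (intro mult_left_mono mult_right_mono)
  qed
  finally show ?thesis by (simp add: mult_ac)
qed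

lemma holomorphic_continuation_series:
  assumes b: "b > 1" and hol: "g holomorphic_on {s. Re s > 1 - real m}"
      and g: "\<And>s. Re s > 1 \<Longrightarrow> g s = hurwitz_zeta_series s b - 1 / (s - 1)"
  shows "(\<lambda>s. \<Sum>j. continuation_term g j s) holomorphic_on {s. Re s > - real m}"
proof (rule holomorphic_uniform_sequence[where f = "\<lambda>N s. \<Sum>j<N. continuation_term g j s"])
  show "open {s. Re s > - real m}" by (simp add: open_halfspace_Re_gt)
  show "(\<lambda>s. \<Sum>j<N. continuation_term g j s) holomorphic_on {s. Re s > - real m}" for N
  proof (intro holomorphic_on_sum)
    fix j
    have "(\<lambda>s. s + of_nat (j+1)) ` {s. Re s > - real m} \<subseteq> {s. Re s > 1 - real m}" by auto
    from holomorphic_on_compose_gen[OF _ hol this]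
    have "(\<lambda>s. g (s + of_nat (j+1))) holomorphic_on {s. Re s > - real m}"
      by (simp add: o_def holomorphic_intros)
    thus "continuation_term g j holomorphic_on {s. Re s > - real m}"
      unfolding continuation_term_def by (intro holomorphic_intros) auto
  qed
  fix x :: complex assume x: "x \<in> {s. Re s > - real m}"
  define d where "d = (Re x + real m) / 2"
  define \<rho> where "\<rho> = norm x + d"
  define K where "K = b powr (1 + \<rho>) * (\<Sum>n. (real n + b) powr (-2))"
  have d: "d > 0" using x by (simp add: d_def)
  have "Re s > - real m" if "s \<in> cball x d" for s
    using x Re_ge_of_mem_cball[OF that] by (simp add: d_def field_simps)
  hence "cball x d \<subseteq> {s. Re s > - real m}" by blast
  moreover have "uniform_limit (cball x d) (\<lambda>N s. \<Sum>j<N. continuation_term g j s)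
                   (\<lambda>s. \<Sum>j. continuation_term g j s) sequentially"
  proof (rule Weierstrass_m_test_ev)
    show "summable (\<lambda>j. pochhammer \<rho> (j+1) / fact (j+1) * (1/b) ^ j * K)"
      using b by (intro summable_mult2 summable_pochhammer_div_fact_power) auto
    have "norm s \<le> \<rho>" if "s \<in> cball x d" for s
      using that norm_triangle_sub[of s x] by (auto simp: \<rho>_def dist_norm norm_minus_commute)
    moreover have "real j \<ge> \<rho> + 2" if "j \<ge> nat \<lceil>\<rho>\<rceil> + 2" for j
      using that by linarith
    ultimately have "\<forall>j \<ge> nat \<lceil>\<rho>\<rceil> + 2. \<forall>s\<in>cball x d.
        norm (continuation_term g j s) \<le> pochhammer \<rho> (j+1) / fact (j+1) * (1/b) ^ j * K"
      unfolding K_def using b g by (blast intro: norm_continuation_term_le)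
    thus "\<forall>\<^sub>F j in sequentially. \<forall>s\<in>cball x d.
        norm (continuation_term g j s) \<le> pochhammer \<rho> (j+1) / fact (j+1) * (1/b) ^ j * K"
      unfolding eventually_sequentially by blast
  qed
  ultimately show "\<exists>d>0. cball x d \<subseteq> {s. Re s > - real m} \<and> uniform_limit (cball x d)
      (\<lambda>N s. \<Sum>j<N. continuation_term g j s) (\<lambda>s. \<Sum>j. continuation_term g j s) sequentially"
    using d by blast
qed

lemma entire_extension_from_halfplanes:
  assumes "\<And>m. \<exists>g. g holomorphic_on {s. Re s > 1 - real m} \<and> (\<forall>s. Re s > 1 \<longrightarrow> g s = F s)"
  shows "\<exists>g. g holomorphic_on UNIV \<and> (\<forall>s. Re s > 1 \<longrightarrow> g s = F s)"
proof -
  define H where "H m = {s. Re s > 1 - real m}" for m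
  have open_H: "open (H m)" for m unfolding H_def by (simp add: open_halfspace_Re_gt)
  obtain gs where hol: "\<And>m. gs m holomorphic_on H m" and eq: "\<And>m s. Re s > 1 \<Longrightarrow> gs m s = F s"
    using assms unfolding H_def by metis
  have agree: "gs m s = gs m' s" if "s \<in> H m" "s \<in> H m'" for m m' s
  proof (rule analytic_continuation_open[of "{s. Re s > 1}" "H (min m m')" "gs m" "gs m'" s])
    show "open {s. Re s > 1}" by (simp add: open_halfspace_Re_gt)
    show "{s. Re s > 1} \<noteq> {}" by (auto intro!: exI[of _ 2])
    show "connected (H (min m m'))"
      unfolding H_def by (intro convex_connected convex_halfspace_Re_gt)
    show "gs m holomorphic_on H (min m m')" "gs m' holomorphic_on H (min m m')"
      by (auto intro: holomorphic_on_subset[OF hol] simp: H_def)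
  qed (use that eq in \<open>auto simp: H_def open_halfspace_Re_gt min_def\<close>)
  define M where "M s = nat \<lceil>- Re s\<rceil> + 2" for s
  have in_H: "s \<in> H (M s)" for s
  proof -
    have "- Re s \<le> real (nat \<lceil>- Re s\<rceil>)" by linarith
    thus ?thesis by (simp add: H_def M_def)
  qed
  define g where "g s = gs (M s) s" for s
  have "(g has_field_derivative deriv (gs (M s)) s) (at s)" for s
  proof (rule has_field_derivative_transform_within_open[OF _ open_H in_H])
    show "(gs (M s) has_field_derivative deriv (gs (M s)) s) (at s)"
      using hol open_H in_H by (intro holomorphic_derivI) auto
    show "gs (M s) z = g z" if "z \<in> H (M s)" for z
      unfolding g_def using agree[OF that in_H] .
  qed
  hence "g holomorphic_on UNIV"
    by (auto simp: holomorphic_on_open)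
  moreover have "g s = F s" if "Re s > 1" for s
    using that eq by (simp add: g_def)
  ultimately show ?thesis by blast
qed

lemma hurwitz_regular_part_extends:
  assumes "b > 1"
  shows "\<exists>g. g holomorphic_on {s. Re s > 1 - real m} \<and>
             (\<forall>s. Re s > 1 \<longrightarrow> g s = hurwitz_zeta_series s b - 1 / (s - 1))"
proof (induction m)
  case 0
  have "(\<lambda>s. hurwitz_zeta_series s b - 1 / (s - 1)) holomorphic_on {s. Re s > 1}"
    using holomorphic_hurwitz_zeta_series[of b] assms by (intro holomorphic_intros) auto
  thus ?case by auto
next
  case (Suc m)
  then obtain g where hol: "g holomorphic_on {s. Re s > 1 - real m}"
      and g: "\<And>s. Re s > 1 \<Longrightarrow> g s = hurwitz_zeta_series s b - 1 / (s - 1)"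
    by blast
  show ?case
  proof (intro exI conjI allI impI)
    show "(\<lambda>s. powr_difference_quotient b s - (\<Sum>j. continuation_term g j s))
            holomorphic_on {s. Re s > 1 - real (Suc m)}"
      using assms entire_powr_difference_quotient[of b] holomorphic_continuation_series[OF assms hol g]
      by (intro holomorphic_on_diff) (auto intro: holomorphic_on_subset)
    fix s :: complex assume s: "Re s > 1"
    hence "s \<noteq> 1" by auto
    with continuation_series_sums[OF assms s g]
    show "powr_difference_quotient b s - (\<Sum>j. continuation_term g j s)
            = hurwitz_zeta_series s b - 1 / (s - 1)"
      by (simp add: sums_iff powr_difference_quotient_def diff_divide_distrib)
  qed
qed

lemma hurwitz_regular_part_exists:
  assumes a: "a > 0"
  shows "\<exists>g. g holomorphic_on UNIV \<and> (\<forall>s. Re s > 1 \<longrightarrow> g s = hurwitz_zeta_series s a - 1 / (s - 1))"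
proof -
  obtain g where hol: "g holomorphic_on UNIV"
      and g: "\<And>s. Re s > 1 \<Longrightarrow> g s = hurwitz_zeta_series s (a+1) - 1 / (s - 1)"
    using entire_extension_from_halfplanes[OF hurwitz_regular_part_extends, of "a+1"] a by auto
  show ?thesis
  proof (intro exI conjI allI impI)
    show "(\<lambda>s. cpowr a (-s) + g s) holomorphic_on UNIV"
      unfolding cpowr_def using a hol by (intro holomorphic_intros) auto
    show "cpowr a (-s) + g s = hurwitz_zeta_series s a - 1 / (s - 1)" if "Re s > 1" for s
      using hurwitz_zeta_series_shift[OF a that] g[OF that] by simp
  qed
qed

lemma hurwitz_zeta_regular:
  assumes "a > 0"
  shows "hurwitz_zeta_regular a holomorphic_on UNIV"
    and "\<And>s. Re s > 1 \<Longrightarrow> hurwitz_zeta_regular a s = hurwitz_zeta_series s a - 1 / (s - 1)"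
proof -
  let ?P = "\<lambda>g. g holomorphic_on UNIV \<and> (\<forall>s. 1 < Re s \<longrightarrow> g s = hurwitz_zeta_series s a - 1 / (s - 1))"
  have "f = g" if "?P f" "?P g" for f g
  proof
    fix z
    show "f z = g z"
      by (rule analytic_continuation_open[of "{s. Re s > 1}" UNIV f g])
         (use that in \<open>auto simp: open_halfspace_Re_gt intro!: exI[of _ 2]\<close>)
  qed
  with hurwitz_regular_part_exists[OF assms] have "\<exists>!g. ?P g" by blast
  hence "?P (hurwitz_zeta_regular a)"
    unfolding hurwitz_zeta_regular_def by (rule theI')
  thus "hurwitz_zeta_regular a holomorphic_on UNIV"
    "\<And>s. Re s > 1 \<Longrightarrow> hurwitz_zeta_regular a s = hurwitz_zeta_series s a - 1 / (s - 1)" by auto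
qed

section \<open>The Stieltjes series and Catalan's constant\<close>

lemma stieltjes_sums:
  assumes "a > 0"
  shows "(\<lambda>k. (-1) ^ k / fact k * stieltjes k a * (z - 1) ^ k) sums hurwitz_zeta_regular a z"
proof -
  have "(\<lambda>k. (deriv ^^ k) (hurwitz_zeta_regular a) 1 / fact k * (z - 1) ^ k) sums hurwitz_zeta_regular a z"
    using holomorphic_on_subset[OF hurwitz_zeta_regular(1)[OF assms]]
    by (intro holomorphic_power_series[where r = "norm (z - 1) + 1"])
       (auto simp: dist_norm norm_minus_commute)
  moreover have "(-1) ^ k * (-1) ^ k = (1 :: complex)" for k
    by (simp flip: power_mult_distrib)
  ultimately show ?thesis
    unfolding stieltjes_def by (simp add: field_simps)
qed

lemma stieltjes_difference_sums:
  assumes "a > 0" "c > 0"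
  shows "(\<lambda>k. (-1) ^ k / fact k * (stieltjes k a - stieltjes k c))
           sums (hurwitz_zeta_series 2 a - hurwitz_zeta_series 2 c)"
proof -
  have "(\<lambda>k. (-1) ^ k / fact k * stieltjes k a * (2 - 1) ^ k - (-1) ^ k / fact k * stieltjes k c * (2 - 1) ^ k)
          sums (hurwitz_zeta_regular a 2 - hurwitz_zeta_regular c 2)"
    using assms by (intro sums_diff stieltjes_sums)
  thus ?thesis
    using assms by (simp add: hurwitz_zeta_regular(2) right_diff_distrib)
qed

lemma summable_inverse_odd_squares: "summable (\<lambda>n. 1 / (2 * real n + 1) ^ 2)"
proof (rule summable_comparison_test'[where g = "\<lambda>n. 1 / (real n + 1) ^ 2"])
  show "summable (\<lambda>n. 1 / (real n + 1) ^ 2)"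
    using inverse_squares_sums by (simp add: sums_iff add.commute)
  show "norm (1 / (2 * real n + 1) ^ 2) \<le> 1 / (real n + 1) ^ 2" for n
    by (simp add: frac_le power_mono)
qed

lemma catalan_sums: "(\<lambda>n. (-1) ^ n / (2 * real n + 1) ^ 2) sums catalan"
  unfolding catalan_def
  by (rule summable_sums, rule summable_comparison_test'[OF summable_inverse_odd_squares])
     simp

lemma catalan_pairs_sums: "(\<lambda>n. 1 / (4 * real n + 1) ^ 2 - 1 / (4 * real n + 3) ^ 2) sums catalan"
proof -
  have "(\<lambda>n. \<Sum>m\<in>{n * 2..<n * 2 + 2}. (-1) ^ m / (2 * real m + 1) ^ 2) sums catalan"
    by (rule sums_group[OF catalan_sums]) auto
  moreover have "{n * 2..<n * 2 + 2} = {2*n, 2*n+1}" for n :: nat by auto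
  ultimately show ?thesis by (simp add: algebra_simps)
qed

lemma catalan_pos: "catalan > 0"
proof -
  have "0 < (\<Sum>n. 1 / (4 * real n + 1) ^ 2 - 1 / (4 * real n + 3) ^ 2)"
    using sums_summable[OF catalan_pairs_sums]
    by (rule suminf_pos) (simp add: frac_less2 power_strict_mono)
  thus ?thesis using catalan_pairs_sums by (simp add: sums_iff)
qed

lemma hurwitz_zeta_series_2_quarters:
  "hurwitz_zeta_series 2 (1/4) - hurwitz_zeta_series 2 (3/4) = 16 * of_real catalan"
proof -
  have cpowr_minus_2: "cpowr x (-2) = of_real (1 / x ^ 2)" if "x > 0" for x
    using that by (simp add: cpowr_def powr_of_real[symmetric] powr_minus powr_realpow divide_inverse)
  have "(\<lambda>n. cpowr (real n + 1/4) (-2) - cpowr (real n + 3/4) (-2))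
          sums (hurwitz_zeta_series 2 (1/4) - hurwitz_zeta_series 2 (3/4))"
    by (intro sums_diff hurwitz_zeta_series_sums) auto
  moreover have "cpowr (real n + 1/4) (-2) - cpowr (real n + 3/4) (-2)
                   = of_real (16 * (1 / (4 * real n + 1) ^ 2 - 1 / (4 * real n + 3) ^ 2))" for n
    by (simp add: cpowr_minus_2 add_pos_nonneg field_simps del: of_real_add)
  moreover have "(\<lambda>n. of_real (16 * (1 / (4 * real n + 1) ^ 2 - 1 / (4 * real n + 3) ^ 2)) :: complex)
                   sums of_real (16 * catalan)"
    by (subst sums_of_real_iff) (intro sums_mult catalan_pairs_sums)
  ultimately show ?thesis by (simp add: sums_iff)
qed

section \<open>Euler products\<close>

definition rough :: "nat \<Rightarrow> nat set" where
  "rough N = {n. n > 0 \<and> (\<forall>p. prime p \<and> p dvd n \<longrightarrow> N < p)}"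

lemma rough_0: "rough 0 = {0<..}"
  by (auto simp: rough_def prime_gt_0_nat)

lemma rough_Suc_not_prime:
  assumes "\<not> prime (Suc N)"
  shows "rough (Suc N) = rough N"
proof -
  have "(Suc N < p) = (N < p)" if "prime p" for p
    using assms that by (metis Suc_lessD Suc_lessI)
  thus ?thesis unfolding rough_def by blast
qed

lemma rough_Suc_prime:
  assumes q: "prime q" "q = Suc N"
  shows "rough N = rough q \<union> (\<lambda>m. q * m) ` rough N" and "rough q \<inter> (\<lambda>m. q * m) ` rough N = {}"
proof -
  have "N < q" using q(2) by simp
  have "n \<in> rough q \<or> n \<in> (\<lambda>m. q * m) ` rough N" if n: "n \<in> rough N" for n
  proof (cases "q dvd n")
    case True
    then obtain m where m: "n = q * m" by (auto elim: dvdE)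
    hence "m \<in> rough N" using n by (auto simp: rough_def intro: dvd_mult)
    thus ?thesis using m by blast
  next
    case False
    have "q < p" if "prime p" "p dvd n" for p
    proof -
      have "N < p" "p \<noteq> q" using n that False by (auto simp: rough_def)
      thus ?thesis using q(2) by linarith
    qed
    hence "n \<in> rough q" using n by (auto simp: rough_def)
    thus ?thesis by blast
  qed
  moreover have "q * m \<in> rough N" if m: "m \<in> rough N" for m
  proof -
    have "N < p" if "prime p" "p dvd q * m" for p
      using that m q(1) \<open>N < q\<close> primes_dvd_imp_eq[of p q]
      by (auto simp: rough_def prime_dvd_mult_iff)
    thus ?thesis using m q(1) prime_gt_0_nat[of q] by (auto simp: rough_def)
  qed
  moreover have "rough q \<subseteq> rough N" using q by (auto simp: rough_def)
  ultimately show "rough N = rough q \<union> (\<lambda>m. q * m) ` rough N" by blast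
  have "q * m \<notin> rough q" for m
    using q(1) by (auto simp: rough_def)
  thus "rough q \<inter> (\<lambda>m. q * m) ` rough N = {}" by blast
qed

lemma summable_on_of_summable_norm:
  fixes f :: "nat \<Rightarrow> 'a :: banach"
  assumes "summable (\<lambda>n. norm (f n))"
  shows "f summable_on A" and "(\<lambda>n. norm (f n)) summable_on A"
proof -
  show "f summable_on A"
    by (rule summable_on_subset_banach[of f UNIV], rule norm_summable_imp_summable_on)
       (use assms in auto)
  show "(\<lambda>n. norm (f n)) summable_on A"
    by (rule summable_on_subset_banach[of _ UNIV], rule summable_nonneg_imp_summable_on)
       (use assms in auto)
qed

lemma tendsto_infsum_norm_tail:
  fixes f :: "nat \<Rightarrow> 'a :: banach"
  assumes summable: "summable (\<lambda>n. norm (f n))"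
  shows "(\<lambda>N. \<Sum>\<^sub>\<infinity>n\<in>{N<..}. norm (f n)) \<longlonglongrightarrow> 0"
proof -
  have total: "(\<Sum>\<^sub>\<infinity>n. norm (f n)) = (\<Sum>n\<le>N. norm (f n)) + (\<Sum>\<^sub>\<infinity>n\<in>{N<..}. norm (f n))" for N
  proof -
    have "UNIV = {..N} \<union> {N<..}" by auto
    hence "(\<Sum>\<^sub>\<infinity>n. norm (f n)) = (\<Sum>\<^sub>\<infinity>n\<in>{..N} \<union> {N<..}. norm (f n))"
      by simp
    also have "\<dots> = (\<Sum>n\<le>N. norm (f n)) + (\<Sum>\<^sub>\<infinity>n\<in>{N<..}. norm (f n))"
      by (subst infsum_Un_disjoint) (auto simp: summable_on_of_summable_norm[OF summable])
    finally show ?thesis .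
  qed
  have "(\<Sum>\<^sub>\<infinity>n. norm (f n)) = (\<Sum>n. norm (f n))"
    using sums_nonneg_imp_has_sum[OF summable_sums[OF summable]] by (simp add: has_sum_iff)
  hence "(\<lambda>N. \<Sum>n\<le>N. norm (f n)) \<longlonglongrightarrow> (\<Sum>\<^sub>\<infinity>n. norm (f n))"
    using summable_LIMSEQ'[OF summable] by simp
  hence "(\<lambda>N. (\<Sum>\<^sub>\<infinity>n. norm (f n)) - (\<Sum>n\<le>N. norm (f n))) \<longlonglongrightarrow> (\<Sum>\<^sub>\<infinity>n. norm (f n)) - (\<Sum>\<^sub>\<infinity>n. norm (f n))"
    by (intro tendsto_intros)
  moreover have "(\<lambda>N. \<Sum>\<^sub>\<infinity>n\<in>{N<..}. norm (f n)) = (\<lambda>N. (\<Sum>\<^sub>\<infinity>n. norm (f n)) - (\<Sum>n\<le>N. norm (f n)))"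
    using total by (auto simp: fun_eq_iff algebra_simps)
  ultimately show ?thesis by simp
qed

lemma infsum_rough:
  fixes f :: "nat \<Rightarrow> 'a :: {real_normed_field, banach}"
  assumes multiplicative: "\<And>m n. f (m * n) = f m * f n"
      and summable: "summable (\<lambda>n. norm (f n))"
  shows "infsum f (rough N) = (\<Prod>p | prime p \<and> p \<le> N. 1 - f p) * infsum f {0<..}"
proof (induction N)
  case 0
  have no_primes: "{p. prime p \<and> p \<le> 0} = ({} :: nat set)" by auto
  show ?case unfolding no_primes by (simp add: rough_0)
next
  case (Suc N)
  show ?case
  proof (cases "prime (Suc N)")
    case False
    hence "{p. prime p \<and> p \<le> Suc N} = {p. prime p \<and> p \<le> N}"
      using le_Suc_eq by auto
    with False Suc.IH show ?thesis by (simp add: rough_Suc_not_prime)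
  next
    case True
    define q where "q = Suc N"
    have q: "prime q" "q \<noteq> 0" using True by (simp_all add: q_def)
    note split = rough_Suc_prime[OF q(1) q_def]
    have "inj_on (\<lambda>m. q * m) (rough N)"
      using q(2) by (auto simp: inj_on_def)
    hence "infsum f ((\<lambda>m. q * m) ` rough N) = infsum (\<lambda>m. f q * f m) (rough N)"
      using infsum_reindex[of "\<lambda>m. q * m" "rough N" f] by (simp add: o_def multiplicative)
    also have "\<dots> = f q * infsum f (rough N)" by (rule infsum_cmult_right')
    finally have multiples: "infsum f ((\<lambda>m. q * m) ` rough N) = f q * infsum f (rough N)" .
    have "infsum f (rough N) = infsum f (rough q \<union> (\<lambda>m. q * m) ` rough N)"
      using split(1) by (rule arg_cong)
    also have "\<dots> = infsum f (rough q) + f q * infsum f (rough N)"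
      unfolding multiples[symmetric]
      by (rule infsum_Un_disjoint[OF summable_on_of_summable_norm(1)[OF summable]
                                     summable_on_of_summable_norm(1)[OF summable] split(2)])
    finally have "infsum f (rough N) = infsum f (rough q) + f q * infsum f (rough N)" .
    hence "infsum f (rough q) = (1 - f q) * infsum f (rough N)"
      by (simp add: algebra_simps)
    moreover have "{p. prime p \<and> p \<le> q} = insert q {p. prime p \<and> p \<le> N}"
      using q(1) by (auto simp: q_def le_Suc_eq)
    moreover have "finite {p. prime p \<and> p \<le> N}" by simp
    ultimately have "infsum f (rough q) = (\<Prod>p | prime p \<and> p \<le> q. 1 - f p) * infsum f {0<..}"
      by (simp add: Suc.IH q_def mult_ac)
    thus ?thesis by (simp add: q_def)
  qed
qed

lemma tendsto_infsum_rough: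
  fixes f :: "nat \<Rightarrow> 'a :: banach"
  assumes summable: "summable (\<lambda>n. norm (f n))"
  shows "(\<lambda>N. infsum f (rough N - {1})) \<longlonglongrightarrow> 0"
proof (rule Lim_null_comparison[OF _ tendsto_infsum_norm_tail[OF summable]], intro always_eventually allI)
  fix N
  have "norm (infsum f (rough N - {1})) \<le> (\<Sum>\<^sub>\<infinity>n\<in>rough N - {1}. norm (f n))"
    by (rule norm_infsum_bound) (simp add: summable_on_of_summable_norm[OF summable])
  also have "\<dots> \<le> (\<Sum>\<^sub>\<infinity>n\<in>{N<..}. norm (f n))"
  proof (rule infsum_mono_neutral)
    \<comment> \<open>apart from \<open>1\<close>, every \<open>N\<close>-rough number exceeds \<open>N\<close>\<close>
    show "norm (f n) \<le> 0" if n: "n \<in> (rough N - {1}) - {N<..}" for n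
    proof -
      obtain p where "prime p" "p dvd n" using n prime_factor_nat by auto
      moreover have "n > 0" using n by (auto simp: rough_def)
      ultimately have "N < p" "p \<le> n" using n by (auto simp: rough_def dvd_imp_le)
      thus ?thesis using n by auto
    qed
  qed (auto simp: summable_on_of_summable_norm[OF summable])
  finally show "norm (infsum f (rough N - {1})) \<le> (\<Sum>\<^sub>\<infinity>n\<in>{N<..}. norm (f n))" .
qed

lemma euler_product_tendsto:
  fixes f :: "nat \<Rightarrow> 'a :: {real_normed_field, banach}"
  assumes "\<And>m n. f (m * n) = f m * f n" and summable: "summable (\<lambda>n. norm (f n))"
      and "f 1 = 1" "(f has_sum L) {0<..}" "L \<noteq> 0"
  shows "(\<lambda>N. \<Prod>p | prime p \<and> p \<le> N. 1 - f p) \<longlonglongrightarrow> 1 / L"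
proof -
  have "infsum f (rough N) = 1 + infsum f (rough N - {1})" for N
  proof -
    have "rough N = {1} \<union> (rough N - {1})" by (auto simp: rough_def)
    hence "infsum f (rough N) = infsum f {1} + infsum f (rough N - {1})"
      by (metis infsum_Un_disjoint[OF summable_on_of_summable_norm(1)[OF summable]
                                      summable_on_of_summable_norm(1)[OF summable]] Diff_disjoint)
    thus ?thesis using assms by simp
  qed
  hence "(\<lambda>N. (\<Prod>p | prime p \<and> p \<le> N. 1 - f p) * L) \<longlonglongrightarrow> 1"
    using tendsto_add[OF tendsto_const tendsto_infsum_rough[OF summable], of 1] assms(4)
    by (simp add: infsum_rough[OF assms(1,2)] has_sum_iff)
  hence "(\<lambda>N. (\<Prod>p | prime p \<and> p \<le> N. 1 - f p) * L * (1 / L)) \<longlonglongrightarrow> 1 * (1 / L)"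
    by (rule tendsto_mult_right)
  thus ?thesis using assms(5) by simp
qed

section \<open>The value of \<open>\<zeta>(4)\<close>\<close>

lemma prod_one_minus_le_second_order:
  fixes a :: "nat \<Rightarrow> real"
  assumes "\<And>k. 0 \<le> a k" "\<And>k. a k \<le> 1"
  shows "(\<Prod>k<n. 1 - a k) \<le> 1 - (\<Sum>k<n. a k) + ((\<Sum>k<n. a k)^2 - (\<Sum>k<n. a k ^ 2)) / 2"
proof (induction n)
  case (Suc n)
  define P E Q x where "P = (\<Prod>k<n. 1 - a k)" and "E = (\<Sum>k<n. a k)"
    and "Q = (\<Sum>k<n. a k ^ 2)" and "x = a n"
  have "1 - E \<le> P"
    unfolding P_def E_def using assms by (intro Weierstrass_prod_ineq) auto
  hence "x * (1 - E) \<le> x * P" using assms by (intro mult_left_mono) (auto simp: x_def)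
  hence "P * (1 - x) \<le> 1 - E + (E^2 - Q) / 2 - x * (1 - E)"
    using Suc.IH by (simp add: P_def E_def Q_def algebra_simps)
  also have "\<dots> = 1 - (E + x) + ((E + x)^2 - (Q + x^2)) / 2"
    by (simp add: power2_eq_square field_simps)
  finally show ?case by (simp add: P_def E_def Q_def x_def)
qed simp

lemma prod_one_minus_ge_third_order:
  fixes a :: "nat \<Rightarrow> real"
  assumes a: "\<And>k. 0 \<le> a k" "\<And>k. a k \<le> 1"
  shows "1 - (\<Sum>k<n. a k) + ((\<Sum>k<n. a k)^2 - (\<Sum>k<n. a k ^ 2)) / 2 - (\<Sum>k<n. a k)^3 \<le> (\<Prod>k<n. 1 - a k)"
proof (induction n)
  case (Suc n)
  define P E Q x where "P = (\<Prod>k<n. 1 - a k)" and "E = (\<Sum>k<n. a k)"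
    and "Q = (\<Sum>k<n. a k ^ 2)" and "x = a n"
  have x: "0 \<le> x" and E: "0 \<le> E" and Q: "0 \<le> Q"
    using a by (auto simp: x_def E_def Q_def intro: sum_nonneg)
  have "P \<le> 1 - E + (E^2 - Q) / 2"
    unfolding P_def E_def Q_def by (rule prod_one_minus_le_second_order) (use a in auto)
  hence "x * P \<le> x * (1 - E + (E^2 - Q) / 2)"
    using x by (rule mult_left_mono)
  hence "(1 - E + (E^2 - Q) / 2 - E^3) - x * (1 - E + (E^2 - Q) / 2) \<le> P * (1 - x)"
    using Suc.IH by (simp add: P_def E_def Q_def algebra_simps)
  moreover have "(E^2 - Q) / 2 \<le> 3 * E^2"
    using Q zero_le_power2[of E] by (simp add: field_simps)
  hence "x * ((E^2 - Q) / 2) \<le> x * (3 * E^2)"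
    using x by (rule mult_left_mono)
  moreover have "E^3 + x * (3 * E^2) \<le> (E + x)^3"
    using x E by (simp add: power3_eq_cube power2_eq_square algebra_simps)
  ultimately have "1 - (E + x) + ((E + x)^2 - (Q + x^2)) / 2 - (E + x)^3 \<le> P * (1 - x)"
    by (simp add: power2_eq_square field_simps)
  thus ?case by (simp add: P_def E_def Q_def x_def)
qed simp

lemma summable_inverse_fourth_powers: "summable (\<lambda>n. 1 / (real n + 1) ^ 4)"
proof (rule summable_comparison_test')
  show "summable (\<lambda>n. 1 / (real n + 1) ^ 2)"
    using inverse_squares_sums by (simp add: sums_iff add.commute)
  show "norm (1 / (real n + 1) ^ 4) \<le> 1 / (real n + 1) ^ 2" for n
    by (simp add: divide_left_mono power_increasing)
qed

text \<open>Truncations of the Taylor series of \<open>sin (\<pi> x) / (\<pi> x)\<close>, obtained from Euler's product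
  \<open>\<Prod>k. 1 - x\<^sup>2/(k+1)\<^sup>2\<close>; comparing the \<open>x\<^sup>4\<close>-coefficients then yields \<open>\<zeta>(4)\<close>.\<close>
lemma sinc_pi_bounds:
  fixes x :: real
  defines "Z4 \<equiv> (\<Sum>n. 1 / (real n + 1) ^ 4)"
  assumes x: "0 < x" "x \<le> 1"
  shows "sin (pi * x) / (pi * x) \<le> 1 - x^2 * (pi^2/6) + x^4 * (((pi^2/6)^2 - Z4) / 2)"
    and "1 - x^2 * (pi^2/6) + x^4 * (((pi^2/6)^2 - Z4) / 2) - x^4 * (x^2 * (pi^2/6)^3)
           \<le> sin (pi * x) / (pi * x)"
proof -
  define a where "a k = x^2 / (real k + 1)^2" for k
  have a: "0 \<le> a k" "a k \<le> 1" for k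
    using x by (auto simp: a_def power_le_one intro: order.trans[of _ 1])
  define S2 S4 where "S2 n = (\<Sum>k<n. 1 / (real k + 1)^2)" and "S4 n = (\<Sum>k<n. 1 / (real k + 1)^4)" for n
  have sum_a: "(\<Sum>k<n. a k) = x^2 * S2 n" and sum_a2: "(\<Sum>k<n. a k ^ 2) = x^4 * S4 n" for n
    by (simp_all add: a_def S2_def S4_def sum_distrib_left power_divide flip: power_mult)
  define U where "U y z = 1 - x^2 * y + ((x^2 * y)^2 - x^4 * z) / 2" for y z
  have "(\<lambda>n. \<Prod>k=1..n. 1 - x^2 / real k ^ 2) \<longlonglongrightarrow> sin (pi * x) / (pi * x)"
    using sin_product_formula_real'[of x] x by simp
  moreover have "(\<Prod>k=1..n. 1 - x^2 / real k ^ 2) = (\<Prod>k<n. 1 - a k)" for n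
    by (induction n) (simp_all add: prod.cl_ivl_Suc a_def add.commute)
  ultimately have P: "(\<lambda>n. \<Prod>k<n. 1 - a k) \<longlonglongrightarrow> sin (pi * x) / (pi * x)" by simp
  have "(\<lambda>n. 1 / (real n + 1)^2) sums (pi^2/6)"
    using inverse_squares_sums by (simp add: add.commute)
  hence S2: "S2 \<longlonglongrightarrow> pi^2/6" by (simp add: S2_def[abs_def] sums_def)
  have S4: "S4 \<longlonglongrightarrow> Z4"
    using summable_sums[OF summable_inverse_fourth_powers] by (simp add: S4_def[abs_def] Z4_def sums_def)
  have U: "(\<lambda>n. U (S2 n) (S4 n)) \<longlonglongrightarrow> U (pi^2/6) Z4"
    unfolding U_def by (intro tendsto_intros S2 S4) auto
  have "sin (pi * x) / (pi * x) \<le> U (pi^2/6) Z4"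
  proof (rule LIMSEQ_le[OF P U], intro exI allI impI)
    show "(\<Prod>k<n. 1 - a k) \<le> U (S2 n) (S4 n)" for n
      using prod_one_minus_le_second_order[of a n] a by (simp add: U_def sum_a sum_a2)
  qed
  thus "sin (pi * x) / (pi * x) \<le> 1 - x^2 * (pi^2/6) + x^4 * (((pi^2/6)^2 - Z4) / 2)"
    by (simp add: U_def algebra_simps power2_eq_square power4_eq_xxxx)
  have "(\<lambda>n. U (S2 n) (S4 n) - (x^2 * S2 n)^3) \<longlonglongrightarrow> U (pi^2/6) Z4 - (x^2 * (pi^2/6))^3"
    by (intro tendsto_intros U S2)
  hence "U (pi^2/6) Z4 - (x^2 * (pi^2/6))^3 \<le> sin (pi * x) / (pi * x)"
  proof (rule LIMSEQ_le[OF _ P], intro exI allI impI)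
    show "U (S2 n) (S4 n) - (x^2 * S2 n)^3 \<le> (\<Prod>k<n. 1 - a k)" for n
      using prod_one_minus_ge_third_order[of a n] a by (simp add: U_def sum_a sum_a2)
  qed
  thus "1 - x^2 * (pi^2/6) + x^4 * (((pi^2/6)^2 - Z4) / 2) - x^4 * (x^2 * (pi^2/6)^3)
          \<le> sin (pi * x) / (pi * x)"
    by (simp add: U_def algebra_simps power2_eq_square power4_eq_xxxx eval_nat_numeral)
qed

lemma sinc_pi_fourth_order_tendsto:
  "((\<lambda>x. (sin (pi * x) / (pi * x) - 1 + x^2 * (pi^2/6)) / x^4) \<longlongrightarrow> pi^4 / 120) (at_right 0)"
proof -
  have asymp: "((\<lambda>t::real. (sin t / t - 1 + t^2/6) / t^4) \<longlongrightarrow> 1/120) (at_right 0)"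
    by real_asymp
  have "filterlim (\<lambda>x. pi * x) (at_right 0) (at_right (0::real))"
  proof -
    have "((\<lambda>x. pi * x) \<longlongrightarrow> pi * 0) (at_right (0::real))" by (intro tendsto_intros)
    moreover have "eventually (\<lambda>x. pi * x \<in> {0<..} \<and> pi * x \<noteq> 0) (at_right (0::real))"
      unfolding eventually_at_right_field by (auto intro!: exI[of _ 1])
    ultimately show ?thesis by (simp add: filterlim_at)
  qed
  from filterlim_compose[OF asymp this]
  have "((\<lambda>x. pi^4 * ((sin (pi * x) / (pi * x) - 1 + (pi * x)^2/6) / (pi * x)^4))
          \<longlongrightarrow> pi^4 * (1/120)) (at_right 0)"
    by (intro tendsto_mult_left)
  moreover have "(pi * x)^2/6 = x^2 * (pi^2/6)" "(pi * x)^4 = pi^4 * x^4" for x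
    by (simp_all add: power_mult_distrib)
  ultimately show ?thesis by simp
qed

lemma inverse_fourth_powers_sums: "(\<lambda>n. 1 / (real n + 1) ^ 4) sums (pi ^ 4 / 90)"
proof -
  define Z4 where "Z4 = (\<Sum>n. 1 / (real n + 1) ^ 4)"
  define c where "c = ((pi^2/6)^2 - Z4) / 2"
  define R where "R x = (sin (pi * x) / (pi * x) - 1 + x^2 * (pi^2/6)) / x^4" for x :: real
  have small: "eventually (\<lambda>x. 0 < x \<and> x \<le> (1::real)) (at_right 0)"
    unfolding eventually_at_right_field by (auto intro!: exI[of _ 1])
  have bounds: "c - x^2 * (pi^2/6)^3 \<le> R x \<and> R x \<le> c" if x: "0 < x" "x \<le> 1" for x
  proof
    have x4: "x^4 > 0" using x by simp
    have "sin (pi * x) / (pi * x) - 1 + x^2 * (pi^2/6) \<le> x^4 * c"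
      using sinc_pi_bounds(1)[OF x] unfolding c_def Z4_def by linarith
    thus "R x \<le> c" using x4 by (simp add: R_def divide_le_eq mult.commute)
    have "x^4 * (c - x^2 * (pi^2/6)^3) \<le> sin (pi * x) / (pi * x) - 1 + x^2 * (pi^2/6)"
      using sinc_pi_bounds(2)[OF x] unfolding c_def Z4_def right_diff_distrib by linarith
    thus "c - x^2 * (pi^2/6)^3 \<le> R x" using x4 by (simp add: R_def le_divide_eq mult.commute)
  qed
  have "(R \<longlongrightarrow> c) (at_right 0)"
  proof (rule tendsto_sandwich[where f = "\<lambda>x. c - x^2 * (pi^2/6)^3" and h = "\<lambda>_. c"])
    show "eventually (\<lambda>x. c - x^2 * (pi^2/6)^3 \<le> R x) (at_right 0)"
         "eventually (\<lambda>x. R x \<le> c) (at_right 0)"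
      using small by (auto elim!: eventually_mono dest: bounds)
    show "((\<lambda>x. c - x^2 * (pi^2/6)^3) \<longlongrightarrow> c) (at_right 0)"
      by (auto intro!: tendsto_eq_intros)
  qed simp
  hence "c = pi^4 / 120"
    using sinc_pi_fourth_order_tendsto unfolding R_def[abs_def] by (rule tendsto_unique[rotated]) simp
  moreover have "(pi^2/6)^2 = pi^4/36" by (simp add: power_divide flip: power_mult)
  ultimately have "Z4 = pi^4 / 90" by (simp add: c_def)
  thus ?thesis
    using summable_sums[OF summable_inverse_fourth_powers] by (simp only: Z4_def)
qed

section \<open>Products over primes in residue classes modulo 4\<close>

definition chi4 :: "nat \<Rightarrow> real" where
  "chi4 n = (if n mod 4 = 1 then 1 else if n mod 4 = 3 then -1 else 0)"

lemma chi4_mult: "chi4 (m * n) = chi4 m * chi4 n"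
proof -
  have "(m * n) mod 4 = ((m mod 4) * (n mod 4)) mod 4" by (simp add: mod_mult_eq)
  moreover have "m mod 4 \<in> {0,1,2,3}" "n mod 4 \<in> {0,1,2,3}" by auto
  ultimately show ?thesis unfolding chi4_def by auto
qed

lemma chi4_odd: "chi4 (2 * m + 1) = (-1) ^ m"
  by (cases "even m") (auto elim!: evenE oddE simp: chi4_def)

lemma chi4_even: "even n \<Longrightarrow> chi4 n = 0"
proof -
  assume "even n"
  hence "n mod 4 \<noteq> 1 \<and> n mod 4 \<noteq> 3" by presburger
  thus ?thesis by (simp add: chi4_def)
qed

lemma has_sum_positive_of_sums:
  fixes f :: "nat \<Rightarrow> 'a :: banach"
  assumes "summable (\<lambda>n. norm (f n))" "(\<lambda>n. f (Suc n)) sums L"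
  shows "(f has_sum L) {0<..}"
proof -
  have "summable (\<lambda>n. norm (f (Suc n)))" using assms(1) by (subst summable_Suc_iff)
  hence "((\<lambda>n. f (Suc n)) has_sum L) UNIV" using assms(2) by (rule norm_summable_imp_has_sum)
  moreover have "bij_betw Suc UNIV {0<..}" by (rule bij_betwI[where g = "\<lambda>n. n - 1"]) auto
  ultimately show ?thesis by (simp add: has_sum_reindex_bij_betw)
qed

lemma summable_norm_inverse_powers: "k \<ge> 2 \<Longrightarrow> summable (\<lambda>n. norm (1 / real n ^ k))"
  using inverse_power_summable[of k, where 'a = real] by (simp add: divide_inverse)

lemma euler_product_inverse_squares:
  "(\<lambda>N. \<Prod>p | prime p \<and> p \<le> N. 1 - 1 / real p ^ 2) \<longlonglongrightarrow> 1 / (pi^2 / 6)"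
proof (rule euler_product_tendsto)
  show "((\<lambda>n. 1 / real n ^ 2) has_sum pi^2 / 6) {0<..}"
    using inverse_squares_sums summable_norm_inverse_powers[of 2]
    by (intro has_sum_positive_of_sums) (simp_all add: add.commute)
qed (use summable_norm_inverse_powers[of 2] in \<open>simp_all add: power_mult_distrib\<close>)

lemma euler_product_inverse_fourth_powers:
  "(\<lambda>N. \<Prod>p | prime p \<and> p \<le> N. 1 - 1 / real p ^ 4) \<longlonglongrightarrow> 1 / (pi^4 / 90)"
proof (rule euler_product_tendsto)
  show "((\<lambda>n. 1 / real n ^ 4) has_sum pi^4 / 90) {0<..}"
    using inverse_fourth_powers_sums summable_norm_inverse_powers[of 4]
    by (intro has_sum_positive_of_sums) (simp_all add: add.commute)
qed (use summable_norm_inverse_powers[of 4] in \<open>simp_all add: power_mult_distrib\<close>)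

lemma has_sum_chi4_inverse_squares: "((\<lambda>n. chi4 n / real n ^ 2) has_sum catalan) {0<..}"
proof -
  have "summable (\<lambda>m. norm ((-1) ^ m / (2 * real m + 1) ^ 2 :: real))"
    by (rule summable_comparison_test'[OF summable_inverse_odd_squares]) simp
  from norm_summable_imp_has_sum[OF this catalan_sums]
  have "((\<lambda>n. chi4 n / real n ^ 2) has_sum catalan) ((\<lambda>m. 2 * m + 1) ` UNIV)"
    by (subst has_sum_reindex) (auto simp: inj_on_def o_def chi4_odd[simplified] add.commute)
  moreover have "chi4 n / real n ^ 2 = 0" if "n \<in> {0<..} - range (\<lambda>m. 2 * m + 1)" for n
    using that oddE[of n] by (force simp: chi4_even)
  ultimately show ?thesis
    by (rule has_sum_cong_neutral[THEN iffD1, rotated -1]) auto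
qed

lemma euler_product_chi4:
  "(\<lambda>N. \<Prod>p | prime p \<and> p \<le> N. 1 - chi4 p / real p ^ 2) \<longlonglongrightarrow> 1 / catalan"
proof (rule euler_product_tendsto)
  show "summable (\<lambda>n. norm (chi4 n / real n ^ 2))"
    by (rule summable_comparison_test'[OF summable_norm_inverse_powers[of 2]]) (auto simp: chi4_def)
  show "chi4 (m * n) / real (m * n) ^ 2 = chi4 m / real m ^ 2 * (chi4 n / real n ^ 2)" for m n
    by (simp add: chi4_mult power_mult_distrib)
qed (use has_sum_chi4_inverse_squares catalan_pos in \<open>simp_all add: chi4_def\<close>)

lemma prime_mod_4_cases:
  assumes "prime (p::nat)"
  obtains "p = 2" | "p mod 4 = 1" | "p mod 4 = 3"
proof -
  have "p = 2 \<or> odd p" using assms prime_odd_nat prime_ge_2_nat[OF assms] by force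
  hence "p = 2 \<or> p mod 4 = 1 \<or> p mod 4 = 3" by presburger
  thus ?thesis using that by blast
qed

lemma prime_square_ge_4: "prime (p::nat) \<Longrightarrow> real p ^ 2 \<ge> 4"
  using power_mono[of 2 "real p" 2] prime_ge_2_nat[of p] by simp

lemma euler_factor_ratio_mod4_3:
  assumes "prime p"
  shows "(1 - 1 / real p ^ 2) / (1 - chi4 p / real p ^ 2)
           = (if p = 2 then 3/4 else 1) * (if p mod 4 = 3 then (real p ^ 2 - 1) / (real p ^ 2 + 1) else 1)"
proof -
  obtain y where y_eq: "real p ^ 2 = y" by simp
  have y: "y \<ge> 4" using prime_square_ge_4[OF assms] by (simp add: y_eq)
  have "y - chi4 p > 0" using y by (simp add: chi4_def)
  hence "(1 - 1 / y) / (1 - chi4 p / y) = (y - 1) / (y - chi4 p)"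
    using y by (simp add: field_simps)
  also have "\<dots> = (if p = 2 then 3/4 else 1) * (if p mod 4 = 3 then (y - 1) / (y + 1) else 1)"
    using y y_eq by (cases rule: prime_mod_4_cases[OF assms]) (auto simp: chi4_def)
  finally show ?thesis by (simp add: y_eq)
qed

lemma euler_factor_ratio_mod4_1:
  assumes "prime p"
  shows "(1 - 1 / real p ^ 4) / ((1 - 1 / real p ^ 2) * (1 - chi4 p / real p ^ 2))
           = (if p = 2 then 5/4 else 1) * (if p mod 4 = 1 then (real p ^ 2 + 1) / (real p ^ 2 - 1) else 1)"
proof -
  obtain y where y_eq: "real p ^ 2 = y" by simp
  have p4: "real p ^ 4 = y ^ 2" by (simp flip: y_eq power_mult)
  have y: "y \<ge> 4" using prime_square_ge_4[OF assms] by (simp add: y_eq)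
  have "y - chi4 p > 0" using y by (simp add: chi4_def)
  moreover have "1 - 1 / y ^ 2 = (y - 1) * (y + 1) / y ^ 2"
    and "(1 - 1 / y) * (1 - chi4 p / y) = (y - 1) * (y - chi4 p) / y ^ 2"
    using y by (simp_all add: field_simps power2_eq_square)
  ultimately have "(1 - 1 / y ^ 2) / ((1 - 1 / y) * (1 - chi4 p / y)) = (y + 1) / (y - chi4 p)"
    using y by simp
  also have "\<dots> = (if p = 2 then 5/4 else 1) * (if p mod 4 = 1 then (y + 1) / (y - 1) else 1)"
    using y y_eq by (cases rule: prime_mod_4_cases[OF assms]) (auto simp: chi4_def)
  finally show ?thesis by (simp add: y_eq p4)
qed

lemma prod_primes_upto_if:
  "(\<Prod>p\<le>(N::nat). if prime p \<and> P p then g p else 1)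
     = (\<Prod>p | prime p \<and> p \<le> N. if P p then g p else (1::'a::comm_monoid_mult))"
proof -
  have "(\<Prod>p | prime p \<and> p \<le> N. if P p then g p else 1)
          = (\<Prod>p\<in>{p \<in> {..N}. prime p}. if P p then g p else 1)"
    by (rule prod.cong) auto
  also have "\<dots> = (\<Prod>p\<le>N. if prime p then if P p then g p else 1 else 1)"
    by (rule prod.inter_filter) simp
  finally show ?thesis by (simp add: if_if_eq_conj)
qed

lemma prod_primes_upto_extract_two:
  assumes "N \<ge> 2"
  shows "(\<Prod>p | prime p \<and> p \<le> N. (if p = (2::nat) then c else 1) * g p)
           = c * (\<Prod>p | prime p \<and> p \<le> N. g p :: 'a::comm_monoid_mult)"
  using assms by (simp add: prod.distrib)

lemma euler_product_mod4_3:
  "(\<lambda>N. \<Prod>p\<le>N. if prime p \<and> p mod 4 = 3 then (real p ^ 2 - 1) / (real p ^ 2 + 1) else 1)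
     \<longlonglongrightarrow> 8 * catalan / pi ^ 2"
proof -
  have "(\<lambda>N. 4/3 * ((\<Prod>p | prime p \<and> p \<le> N. 1 - 1 / real p ^ 2) /
                    (\<Prod>p | prime p \<and> p \<le> N. 1 - chi4 p / real p ^ 2)))
          \<longlonglongrightarrow> 4/3 * ((1 / (pi^2 / 6)) / (1 / catalan))"
    using catalan_pos
    by (intro tendsto_intros euler_product_inverse_squares euler_product_chi4) simp
  moreover have "eventually (\<lambda>N. 4/3 * ((\<Prod>p | prime p \<and> p \<le> N. 1 - 1 / real p ^ 2) /
                    (\<Prod>p | prime p \<and> p \<le> N. 1 - chi4 p / real p ^ 2))
          = (\<Prod>p\<le>N. if prime p \<and> p mod 4 = 3 then (real p ^ 2 - 1) / (real p ^ 2 + 1) else 1))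
          sequentially"
    using eventually_ge_at_top[of 2]
    by eventually_elim
       (simp add: prod_primes_upto_if euler_factor_ratio_mod4_3 prod_primes_upto_extract_two
             flip: prod_dividef)
  ultimately show ?thesis
    by (simp add: tendsto_cong)
qed

lemma euler_product_mod4_1:
  "(\<lambda>N. \<Prod>p\<le>N. if prime p \<and> p mod 4 = 1 then (real p ^ 2 + 1) / (real p ^ 2 - 1) else 1)
     \<longlonglongrightarrow> 12 * catalan / pi ^ 2"
proof -
  have "(\<lambda>N. 4/5 * ((\<Prod>p | prime p \<and> p \<le> N. 1 - 1 / real p ^ 4) /
                    ((\<Prod>p | prime p \<and> p \<le> N. 1 - 1 / real p ^ 2) *
                     (\<Prod>p | prime p \<and> p \<le> N. 1 - chi4 p / real p ^ 2))))
          \<longlonglongrightarrow> 4/5 * ((1 / (pi^4 / 90)) / ((1 / (pi^2 / 6)) * (1 / catalan)))"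
    using catalan_pos
    by (intro tendsto_intros euler_product_inverse_fourth_powers euler_product_inverse_squares
          euler_product_chi4) simp
  moreover have "4/5 * ((1 / (pi^4 / 90)) / ((1 / (pi^2 / 6)) * (1 / catalan))) = 12 * catalan / pi ^ 2"
    by (simp add: field_simps power2_eq_square power4_eq_xxxx)
  moreover have "eventually (\<lambda>N. 4/5 * ((\<Prod>p | prime p \<and> p \<le> N. 1 - 1 / real p ^ 4) /
                    ((\<Prod>p | prime p \<and> p \<le> N. 1 - 1 / real p ^ 2) *
                     (\<Prod>p | prime p \<and> p \<le> N. 1 - chi4 p / real p ^ 2)))
          = (\<Prod>p\<le>N. if prime p \<and> p mod 4 = 1 then (real p ^ 2 + 1) / (real p ^ 2 - 1) else 1))
          sequentially"
    using eventually_ge_at_top[of 2]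
    by eventually_elim
       (simp add: prod_primes_upto_if euler_factor_ratio_mod4_1 prod_primes_upto_extract_two
             flip: prod_dividef prod.distrib)
  ultimately show ?thesis
    by (simp add: tendsto_cong)
qed

lemma has_prod_of_tendsto:
  fixes f :: "nat \<Rightarrow> 'a :: {real_normed_field, banach}"
  assumes "\<And>i. f i \<noteq> 0" and lim: "(\<lambda>n. \<Prod>i\<le>n. f i) \<longlonglongrightarrow> L" and "L \<noteq> 0"
  shows "f has_prod L"
proof -
  have "convergent_prod f" using assms by (subst convergent_prod_iff_nz_lim) auto
  with LIMSEQ_unique[OF convergent_prod_LIMSEQ lim] show ?thesis by (simp add: has_prod_iff)
qed

theorem proposition7:
  defines "f3 \<equiv> (\<lambda>p::nat. if prime p \<and> p mod 4 = 3
                 then (real p ^ 2 - 1) / (real p ^ 2 + 1) else 1)"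
      and "f1 \<equiv> (\<lambda>p::nat. if prime p \<and> p mod 4 = 1
                 then (real p ^ 2 + 1) / (real p ^ 2 - 1) else 1)"
      and "S \<equiv> (\<lambda>k::nat. (-1) ^ k / fact k * (stieltjes k (1/4) - stieltjes k (3/4)))"
  shows "convergent_prod f3 \<and> summable S \<and>
         catalan = pi ^ 2 / 8 * prodinf f3 \<and>
         complex_of_real catalan = 1 / 16 * suminf S \<and>
         convergent_prod f1 \<and>
         prodinf f1 = 12 / pi ^ 2 * catalan \<and>
         complex_of_real (12 / pi ^ 2 * catalan) = 3 / (4 * complex_of_real pi ^ 2) * suminf S"
proof -
  have "f3 has_prod (8 * catalan / pi ^ 2)"
  proof (rule has_prod_of_tendsto)
    show "f3 p \<noteq> 0" for p using prime_square_ge_4[of p] by (auto simp: f3_def)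
  qed (use euler_product_mod4_3 catalan_pos in \<open>simp_all add: f3_def\<close>)
  moreover have "f1 has_prod (12 * catalan / pi ^ 2)"
  proof (rule has_prod_of_tendsto)
    show "f1 p \<noteq> 0" for p using prime_square_ge_4[of p] by (auto simp: f1_def)
  qed (use euler_product_mod4_1 catalan_pos in \<open>simp_all add: f1_def\<close>)
  moreover have "S sums (16 * of_real catalan)"
    using stieltjes_difference_sums[of "1/4" "3/4"] hurwitz_zeta_series_2_quarters
    by (simp add: S_def)
  ultimately show ?thesis
    by (simp add: has_prod_iff sums_iff field_simps)
qed

end
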